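(* Let $T$ be a tree with $k$ leaves, let $1\le l$ be an integer, and let $s$ and $t$ be disjoint subtrees of $T$ such that $s$ has $l$ boundary nodes and $t$ has $k-l+2$ boundary nodes. Then every node of $T$ of degree greater than two belongs to $s$ or to $t$.
   Context: A subtree of a tree $T$ is a nonempty set of nodes inducing a connected subgraph. A boundary node of a subtree $t$ of $T$ is a node of $t$ that has a neighbour in $T$ not belonging to $t$. *)

theory Defs
  imports Main
begin

definition simple_graph :: "'a set \<Rightarrow> ('a \<Rightarrow> 'a \<Rightarrow> bool) \<Rightarrow> bool" where
  "simple_graph V E \<longleftrightarrow> finite V \<and> (\<forall>x y. E x y \<longrightarrow> x \<in> V \<and> y \<in> V)
     \<and> (\<forall>x y. E x y \<longrightarrow> E y x) \<and> (\<forall>x. \<not> E x x)"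

definition connected_on :: "('a \<Rightarrow> 'a \<Rightarrow> bool) \<Rightarrow> 'a set \<Rightarrow> bool" where
  "connected_on E S \<longleftrightarrow> (\<forall>x\<in>S. \<forall>y\<in>S. (\<lambda>a b. E a b \<and> a \<in> S \<and> b \<in> S)\<^sup>*\<^sup>* x y)"

definition is_cycle :: "('a \<Rightarrow> 'a \<Rightarrow> bool) \<Rightarrow> 'a list \<Rightarrow> bool" where
  "is_cycle E cs \<longleftrightarrow> length cs \<ge> 3 \<and> distinct cs
     \<and> (\<forall>i. Suc i < length cs \<longrightarrow> E (cs ! i) (cs ! Suc i))
     \<and> E (last cs) (hd cs)"

definition tree :: "'a set \<Rightarrow> ('a \<Rightarrow> 'a \<Rightarrow> bool) \<Rightarrow> bool" where
  "tree V E \<longleftrightarrow> simple_graph V E \<and> V \<noteq> {} \<and> connected_on E V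
     \<and> (\<nexists>cs. is_cycle E cs)"

definition degree :: "'a set \<Rightarrow> ('a \<Rightarrow> 'a \<Rightarrow> bool) \<Rightarrow> 'a \<Rightarrow> nat" where
  "degree V E v = card {u \<in> V. E v u}"

definition leaves :: "'a set \<Rightarrow> ('a \<Rightarrow> 'a \<Rightarrow> bool) \<Rightarrow> 'a set" where
  "leaves V E = {v \<in> V. degree V E v = 1}"

definition subtree :: "'a set \<Rightarrow> ('a \<Rightarrow> 'a \<Rightarrow> bool) \<Rightarrow> 'a set \<Rightarrow> bool" where
  "subtree V E S \<longleftrightarrow> S \<noteq> {} \<and> S \<subseteq> V \<and> connected_on E S"

definition boundary :: "'a set \<Rightarrow> ('a \<Rightarrow> 'a \<Rightarrow> bool) \<Rightarrow> 'a set \<Rightarrow> 'a set" where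
  "boundary V E S = {v \<in> S. \<exists>u\<in>V. E v u \<and> u \<notin> S}"

end

theory Submission
  imports Defs
begin

text \<open>Contracting the disjoint subtrees \<open>s\<close> and \<open>t\<close> of the tree \<open>T\<close> to single nodes leaves a
tree, in which the degrees minus two sum to \<open>-2\<close>. Hence the numbers of edges leaving \<open>s\<close> and \<open>t\<close>,
plus the excesses \<open>deg v - 2\<close> of the nodes outside \<open>s \<union> t\<close>, are at most \<open>2\<close> plus the number of
leaves outside \<open>s \<union> t\<close>. Boundary nodes are bounded by leaving edges, so if \<open>s\<close> and \<open>t\<close> have
\<open>k + 2\<close> boundary nodes together, no node outside them can have positive excess. The inequality
is proved by induction on the number of nodes outside \<open>s \<union> t\<close>, absorbing one neighbouring node
at a time.\<close>

lemma simple_graph_sym: "simple_graph V E \<Longrightarrow> E x y \<Longrightarrow> E y x"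
  and simple_graph_in_verts: "simple_graph V E \<Longrightarrow> E x y \<Longrightarrow> x \<in> V \<and> y \<in> V"
  and simple_graph_irrefl: "simple_graph V E \<Longrightarrow> \<not> E x x"
  and simple_graph_finite: "simple_graph V E \<Longrightarrow> finite V"
  by (auto simp: simple_graph_def)

lemma tree_simple_graph: "tree V E \<Longrightarrow> simple_graph V E"
  by (simp add: tree_def)

fun walk :: "('a \<Rightarrow> 'a \<Rightarrow> bool) \<Rightarrow> 'a list \<Rightarrow> bool" where
  "walk E [] = True"
| "walk E [x] = True"
| "walk E (x # y # xs) = (E x y \<and> walk E (y # xs))"

lemma walk_Cons: "walk E (x # xs) \<longleftrightarrow> xs = [] \<or> E x (hd xs) \<and> walk E xs"
  by (cases xs) auto

lemma walk_append:
  "walk E (xs @ ys) \<longleftrightarrow> walk E xs \<and> walk E ys \<and> (xs \<noteq> [] \<and> ys \<noteq> [] \<longrightarrow> E (last xs) (hd ys))"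
  by (induction xs) (auto simp: walk_Cons)

lemma walk_nth: "walk E xs \<Longrightarrow> Suc i < length xs \<Longrightarrow> E (xs ! i) (xs ! Suc i)"
proof (induction E xs arbitrary: i rule: walk.induct)
  case (3 E x y xs)
  then show ?case by (cases i) auto
qed auto

lemma connected_on_distinct_walk:
  assumes "connected_on E A" "x \<in> A" "y \<in> A"
  obtains ps where "ps \<noteq> []" "hd ps = x" "last ps = y" "distinct ps" "set ps \<subseteq> A" "walk E ps"
proof -
  have "(\<lambda>a b. E a b \<and> a \<in> A \<and> b \<in> A)\<^sup>*\<^sup>* x y"
    using assms unfolding connected_on_def by blast
  then have "\<exists>ps. ps \<noteq> [] \<and> hd ps = x \<and> last ps = y \<and> distinct ps \<and> set ps \<subseteq> A \<and> walk E ps"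
  proof (induction rule: converse_rtranclp_induct)
    case base
    show ?case using \<open>y \<in> A\<close> by (intro exI[of _ "[y]"]) auto
  next
    case (step x z)
    then obtain ps where ps: "ps \<noteq> []" "hd ps = z" "last ps = y" "distinct ps" "set ps \<subseteq> A"
      "walk E ps" by blast
    show ?case
    proof (cases "x \<in> set ps")
      case True
      then obtain us vs where "ps = us @ x # vs" by (meson split_list)
      then show ?thesis
        using ps walk_append[of E us "x # vs"] by (intro exI[of _ "x # vs"]) auto
    next
      case False
      then show ?thesis
        using ps step(1) by (intro exI[of _ "x # ps"]) (auto simp: walk_Cons)
    qed
  qed
  then show thesis using that by blast
qed

text \<open>Two different edges between disjoint connected sets close a cycle: walk inside \<open>A\<close>
from one edge to the other, cross, and walk back inside \<open>B\<close>.\<close>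

lemma tree_edge_between_connected_unique:
  assumes T: "tree V E" and AB: "A \<inter> B = {}" "connected_on E A" "connected_on E B"
    and a: "a1 \<in> A" "a2 \<in> A" and b: "b1 \<in> B" "b2 \<in> B" and e: "E a1 b1" "E a2 b2"
  shows "a1 = a2 \<and> b1 = b2"
proof (rule ccontr)
  assume ne: "\<not> (a1 = a2 \<and> b1 = b2)"
  obtain pa where pa: "pa \<noteq> []" "hd pa = a2" "last pa = a1" "distinct pa" "set pa \<subseteq> A" "walk E pa"
    using connected_on_distinct_walk[OF AB(2) a(2,1)] .
  obtain pb where pb: "pb \<noteq> []" "hd pb = b1" "last pb = b2" "distinct pb" "set pb \<subseteq> B" "walk E pb"
    using connected_on_distinct_walk[OF AB(3) b] .
  have "length (pa @ pb) \<ge> 3"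
  proof -
    have "\<not> (length pa = 1 \<and> length pb = 1)"
      using pa pb ne by (auto simp: length_Suc_conv)
    then show ?thesis using pa pb by (cases pa; cases pb) (auto simp: Suc_le_eq)
  qed
  moreover have "distinct (pa @ pb)" using pa pb AB(1) by auto
  moreover have "walk E (pa @ pb)" using pa pb e walk_append[of E pa pb] by auto
  ultimately have "is_cycle E (pa @ pb)"
    unfolding is_cycle_def
    using walk_nth[of E "pa @ pb"] pa pb e simple_graph_sym[OF tree_simple_graph[OF T]] by auto
  then show False using T unfolding tree_def by blast
qed

lemma connected_on_insert:
  assumes "connected_on E S" "b \<in> S" "E b x" "E x b"
  shows "connected_on E (insert x S)"
  unfolding connected_on_def
proof (intro ballI)
  let ?R = "\<lambda>a c. E a c \<and> a \<in> insert x S \<and> c \<in> insert x S"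
  have to_b: "?R\<^sup>*\<^sup>* y b" and from_b: "?R\<^sup>*\<^sup>* b y" if "y \<in> insert x S" for y
  proof -
    have in_S: "?R\<^sup>*\<^sup>* y z" if "y \<in> S" "z \<in> S" for y z
      using assms(1) that unfolding connected_on_def
      by (blast intro: rtranclp_mono[THEN predicate2D, rotated])
    show "?R\<^sup>*\<^sup>* y b" "?R\<^sup>*\<^sup>* b y"
      using that in_S[of y b] in_S[of b y] assms by auto
  qed
  fix y z assume "y \<in> insert x S" "z \<in> insert x S"
  then show "?R\<^sup>*\<^sup>* y z" using to_b from_b rtranclp_trans[of ?R y b z] by blast
qed

lemma connected_on_edge_leaving:
  assumes "connected_on E V" "a \<in> S" "S \<subseteq> V" "v \<in> V" "v \<notin> S"
  obtains p q where "E p q" "p \<in> S" "q \<in> V" "q \<notin> S"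
proof -
  have "(\<lambda>p q. E p q \<and> p \<in> V \<and> q \<in> V)\<^sup>*\<^sup>* a v"
    using assms unfolding connected_on_def by blast
  then have "\<exists>p q. E p q \<and> p \<in> S \<and> q \<in> V \<and> q \<notin> S"
    using \<open>v \<notin> S\<close> by (induction rule: rtranclp_induct) (use \<open>a \<in> S\<close> in blast)+
  then show thesis using that by blast
qed

definition out_edges :: "'a set \<Rightarrow> ('a \<Rightarrow> 'a \<Rightarrow> bool) \<Rightarrow> 'a set \<Rightarrow> ('a \<times> 'a) set" where
  "out_edges V E S = {(a, u). a \<in> S \<and> u \<in> V \<and> u \<notin> S \<and> E a u}"

lemma finite_out_edges: "simple_graph V E \<Longrightarrow> finite (out_edges V E S)"
  by (rule finite_subset[of _ "V \<times> V"])
    (auto simp: out_edges_def simple_graph_in_verts simple_graph_finite)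

lemma card_boundary_le_card_out_edges:
  assumes "simple_graph V E"
  shows "card (boundary V E S) \<le> card (out_edges V E S)"
proof -
  have "boundary V E S = fst ` out_edges V E S"
    unfolding boundary_def out_edges_def by force
  then show ?thesis using card_image_le[OF finite_out_edges[OF assms]] by simp
qed

lemma tree_card_out_edges_complement_le_1:
  assumes T: "tree V E" and "subtree V E s" "subtree V E t" "s \<inter> t = {}" "V = s \<union> t"
  shows "card (out_edges V E s) \<le> 1"
proof -
  have "\<forall>p\<in>out_edges V E s. \<forall>q\<in>out_edges V E s. p = q"
    using assms tree_edge_between_connected_unique[OF T, of s t]
    unfolding out_edges_def subtree_def by blast
  then show ?thesis
    using card_le_Suc0_iff_eq[OF finite_out_edges[OF tree_simple_graph[OF T]]] by simp
qed

text \<open>Absorbing a neighbour \<open>x\<close> of \<open>s\<close> trades the unique edge between \<open>s\<close> and \<open>x\<close> for the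
\<open>degree x - 1\<close> other edges at \<open>x\<close>.\<close>

lemma card_out_edges_insert:
  assumes T: "tree V E" and s: "subtree V E s" and x: "x \<in> V" "x \<notin> s" and b: "b \<in> s" "E b x"
  shows "card (out_edges V E (insert x s)) + 2 = card (out_edges V E s) + degree V E x"
proof -
  have G: "simple_graph V E" using T by (rule tree_simple_graph)
  have b_unique: "c = b" if "c \<in> s" "E c x" for c
  proof -
    have "s \<inter> {x} = {}" "connected_on E {x}" using x by (auto simp: connected_on_def)
    moreover have "connected_on E s" using s by (simp add: subtree_def)
    ultimately show ?thesis
      using tree_edge_between_connected_unique[OF T _ _ _ that(1) b(1) _ _ that(2) b(2)] by blast
  qed
  define N where "N = {u \<in> V. E x u}"
  define A where "A = out_edges V E s \<inter> {p. snd p \<noteq> x}"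
  have finN: "finite N" and finA: "finite A"
    using simple_graph_finite[OF G] finite_out_edges[OF G] by (simp_all add: N_def A_def)
  have bN: "b \<in> N"
    using simple_graph_sym[OF G b(2)] simple_graph_in_verts[OF G b(2)] by (simp add: N_def)
  have N_s: "N \<inter> s = {b}"
  proof -
    have "u = b" if "u \<in> N" "u \<in> s" for u
      using that b_unique[of u] simple_graph_sym[OF G, of x u] by (simp add: N_def)
    then show ?thesis using bN b(1) by blast
  qed
  have out_s: "out_edges V E s = insert (b, x) A" "(b, x) \<notin> A"
    using b x by (auto simp: out_edges_def A_def dest: b_unique)
  have out_xs: "out_edges V E (insert x s) = A \<union> Pair x ` (N - {b})"
    using b x N_s simple_graph_irrefl[OF G] by (auto simp: out_edges_def A_def N_def)
  have "A \<inter> Pair x ` (N - {b}) = {}" using x by (auto simp: A_def out_edges_def)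
  then have "card (out_edges V E (insert x s)) = card A + (card N - 1)"
    unfolding out_xs using finA finN bN by (simp add: card_Un_disjoint card_image inj_on_def)
  moreover have "card N \<ge> 1" using bN finN by (simp add: Suc_le_eq card_gt_0_iff, blast)
  ultimately show ?thesis using out_s finA by (simp add: degree_def N_def[symmetric])
qed

definition branching_excess :: "'a set \<Rightarrow> ('a \<Rightarrow> 'a \<Rightarrow> bool) \<Rightarrow> 'a set \<Rightarrow> nat" where
  "branching_excess V E R = (\<Sum>v\<in>R. degree V E v - 2)"

text \<open>The inductive step, stated for one side only; \<open>c\<close> stands for the number of edges leaving
the other subtree.\<close>

lemma out_edges_excess_bound_insert:
  assumes T: "tree V E" and s: "subtree V E s" and x: "x \<in> V" "x \<notin> s" "x \<notin> t"
    and b: "b \<in> s" "E b x"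
    and bound: "card (out_edges V E (insert x s)) + c + branching_excess V E (V - (insert x s \<union> t))
      \<le> card (leaves V E - (insert x s \<union> t)) + 2"
  shows "card (out_edges V E s) + c + branching_excess V E (V - (s \<union> t))
    \<le> card (leaves V E - (s \<union> t)) + 2"
proof -
  have fin: "finite V" using simple_graph_finite[OF tree_simple_graph[OF T]] .
  have "b \<in> {u \<in> V. E x u}"
    using simple_graph_sym[OF tree_simple_graph[OF T] b(2)] b(1) s by (auto simp: subtree_def)
  then have deg: "degree V E x \<ge> 1"
    using fin by (simp add: degree_def Suc_le_eq card_gt_0_iff, blast)
  have R: "V - (s \<union> t) = insert x (V - (insert x s \<union> t))" "x \<notin> V - (insert x s \<union> t)"
    using x by auto
  have excess: "branching_excess V E (V - (s \<union> t))
      = (degree V E x - 2) + branching_excess V E (V - (insert x s \<union> t))"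
    unfolding branching_excess_def R(1) using R(2) fin by simp
  note out = card_out_edges_insert[OF T s x(1,2) b]
  show ?thesis
  proof (cases "degree V E x = 1")
    case True
    have "finite (leaves V E - (insert x s \<union> t))" using fin by (simp add: leaves_def)
    moreover have "leaves V E - (s \<union> t) = insert x (leaves V E - (insert x s \<union> t))"
      using x True by (auto simp: leaves_def)
    moreover have "x \<notin> leaves V E - (insert x s \<union> t)" by simp
    ultimately have "card (leaves V E - (s \<union> t)) = Suc (card (leaves V E - (insert x s \<union> t)))"
      by (metis card_insert_disjoint)
    moreover have "degree V E x - 2 = 0" using True by simp
    ultimately show ?thesis using bound excess out True by linarith
  next
    case False
    then have "leaves V E - (s \<union> t) = leaves V E - (insert x s \<union> t)"
      using x by (auto simp: leaves_def)
    then have "card (leaves V E - (s \<union> t)) = card (leaves V E - (insert x s \<union> t))"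
      by (rule arg_cong)
    moreover have "degree V E x - 2 + 2 = degree V E x" using False deg by linarith
    ultimately show ?thesis using bound excess out by linarith
  qed
qed

theorem tree_out_edges_excess_bound:
  assumes T: "tree V E" and "subtree V E s" "subtree V E t" "s \<inter> t = {}"
  shows "card (out_edges V E s) + card (out_edges V E t) + branching_excess V E (V - (s \<union> t))
    \<le> card (leaves V E - (s \<union> t)) + 2"
  using assms(2-)
proof (induction "card (V - (s \<union> t))" arbitrary: s t rule: less_induct)
  case less
  have fin: "finite V" using simple_graph_finite[OF tree_simple_graph[OF T]] .
  show ?case
  proof (cases "V = s \<union> t")
    case True
    then show ?thesis
      using tree_card_out_edges_complement_le_1[OF T less.prems]
        tree_card_out_edges_complement_le_1[OF T less.prems(2,1)] less.prems(3)
      by (auto simp: branching_excess_def Un_commute Int_commute)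
  next
    case False
    then obtain v where "v \<in> V" "v \<notin> s \<union> t" using less.prems by (auto simp: subtree_def)
    moreover obtain a where "a \<in> s" using less.prems by (auto simp: subtree_def)
    ultimately obtain p q where pq: "E p q" "p \<in> s \<union> t" "q \<in> V" "q \<notin> s \<union> t"
      using connected_on_edge_leaving[of E V a "s \<union> t" v] T less.prems
      by (auto simp: tree_def subtree_def)
    have smaller: "card (V - (insert q s \<union> t)) < card (V - (s \<union> t))"
      "card (V - (s \<union> insert q t)) < card (V - (s \<union> t))"
      using pq fin by (auto intro!: psubset_card_mono simp del: Un_insert_left Un_insert_right)
    have grow: "subtree V E (insert q S)" if "subtree V E S" "p \<in> S" for S
      using that pq connected_on_insert[of E S p q]
        simple_graph_sym[OF tree_simple_graph[OF T] pq(1)] by (auto simp: subtree_def)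
    show ?thesis
    proof (cases "p \<in> s")
      case True
      then show ?thesis
        using less.hyps[OF smaller(1) grow[OF less.prems(1) True] less.prems(2)] less.prems pq
        by (intro out_edges_excess_bound_insert[OF T less.prems(1)]) auto
    next
      case False
      then have "p \<in> t" using pq by auto
      then have "card (out_edges V E t) + card (out_edges V E s) + branching_excess V E (V - (t \<union> s))
          \<le> card (leaves V E - (t \<union> s)) + 2"
        using less.hyps[OF smaller(2) less.prems(1) grow[OF less.prems(2)]] less.prems pq
        by (intro out_edges_excess_bound_insert[OF T less.prems(2)]) (auto simp: Un_commute add.commute)
      then show ?thesis by (simp add: Un_commute add.commute)
    qed
  qed
qed

theorem lemma3:
  fixes V :: "'a set" and E :: "'a \<Rightarrow> 'a \<Rightarrow> bool" and s t :: "'a set" and k l :: nat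
  assumes "tree V E"
    and "card (leaves V E) = k"
    and "1 \<le> l"
    and "subtree V E s" and "subtree V E t" and "s \<inter> t = {}"
    and "card (boundary V E s) = l"
    and "int (card (boundary V E t)) = int k - int l + 2"
  shows "\<forall>v\<in>V. degree V E v > 2 \<longrightarrow> v \<in> s \<or> v \<in> t"
proof (intro ballI impI, rule ccontr)
  fix v assume v: "v \<in> V" "degree V E v > 2" "\<not> (v \<in> s \<or> v \<in> t)"
  have G: "simple_graph V E" using assms(1) by (rule tree_simple_graph)
  have "1 \<le> branching_excess V E (V - (s \<union> t))"
    unfolding branching_excess_def
    using v simple_graph_finite[OF G] member_le_sum[of v "V - (s \<union> t)" "\<lambda>v. degree V E v - 2"]
    by auto
  moreover have "card (leaves V E - (s \<union> t)) \<le> k"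
    using assms(2) simple_graph_finite[OF G] by (auto simp: leaves_def intro: card_mono)
  ultimately have "card (boundary V E s) + card (boundary V E t) + 1 \<le> k + 2"
    using tree_out_edges_excess_bound[OF assms(1,4,5,6)]
      card_boundary_le_card_out_edges[OF G, of s] card_boundary_le_card_out_edges[OF G, of t]
    by linarith
  then show False using assms(7,8) by linarith
qed

end
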